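(* In the setting (R), fix $x\in\mathbb{R}^n$ and let $(\lambda_k)_k,(\mu_k)_k\subset(0,+\infty)$ converge to $0$ with $\lim_{k\to\infty}\lambda_k/\mu_k=c\in(0,+\infty)$. Let $u_k=u_{\lambda_k,\mu_k}$ and $p_k=\nabla S_{\lambda_k,\mu_k}(x)$. Then $$\lim_{k\to\infty}u_k=\arg\min_{u\in U(x)}\|u\|_2\qquad\text{and}\qquad\lim_{k\to\infty}p_k=\arg\min_{p\in\partial S(x)}\|p\|_2,$$ i.e. $u_k$ and $p_k$ converge to the Euclidean projections of $0$ onto $U(x)$ and $\partial S(x)$, respectively.
   Context: Setting (R): Let $F_1=\|\cdot\|$ and $F_2=|||\cdot|||$ be two norms on $\mathbb{R}^n$, with dual norms $\|\cdot\|_*$ and $|||\cdot|||_*$, so that $F_2^*(y)=I\{|||y|||_*\le1\}$ (indicator: $0$ if $|||y|||_*\le1$, $+\infty$ otherwise). For $x\in\mathbb{R}^n$ define $S(x)=\min_{u\in\mathbb{R}^n}F_1(u)+F_2^*(x-u)$ and $U(x)=\arg\min_{u\in\mathbb{R}^n}F_1(u)+F_2^*(x-u)$ (a nonempty closed convex set). For $\lambda,\mu>0$, problem (P) is $$\min_{v,w\in\mathbb{R}^n}\ F_1(v)+\frac{\lambda}{2}\|v\|_2^2+F_2^*(w)+\frac{1}{2\mu}\|x-v-w\|_2^2,$$ which has a unique minimizer denoted $(v_{\lambda,\mu},w_{\lambda,\mu})$; its minimal value, as a function of $x$, is denoted $S_{\lambda,\mu}(x)$, which is differentiable in $x$; set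 $u_{\lambda,\mu}=x-w_{\lambda,\mu}$. $\partial$ denotes the convex subdifferential. *)

theory Defs
  imports "HOL-Analysis.Analysis"
begin

definition is_norm :: "('a::real_vector \<Rightarrow> real) \<Rightarrow> bool" where
  "is_norm N \<longleftrightarrow> (\<forall>x. N x = 0 \<longleftrightarrow> x = 0) \<and> (\<forall>c x. N (scaleR c x) = \<bar>c\<bar> * N x)
     \<and> (\<forall>x y. N (x + y) \<le> N x + N y)"

definition dual_norm :: "('a::real_inner \<Rightarrow> real) \<Rightarrow> 'a \<Rightarrow> real" where
  "dual_norm N y = Sup {y \<bullet> u | u. N u \<le> 1}"

text \<open>Fenchel conjugate of a norm: indicator of the dual unit ball.\<close>
definition conj_norm :: "('a::real_inner \<Rightarrow> real) \<Rightarrow> 'a \<Rightarrow> ereal" where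
  "conj_norm N y = (if dual_norm N y \<le> 1 then 0 else \<infinity>)"

definition S_obj :: "('a::real_inner \<Rightarrow> real) \<Rightarrow> ('a \<Rightarrow> real) \<Rightarrow> 'a \<Rightarrow> 'a \<Rightarrow> ereal" where
  "S_obj F1 F2 x u = ereal (F1 u) + conj_norm F2 (x - u)"

definition S_fun :: "('a::real_inner \<Rightarrow> real) \<Rightarrow> ('a \<Rightarrow> real) \<Rightarrow> 'a \<Rightarrow> real" where
  "S_fun F1 F2 x = real_of_ereal (INF u. S_obj F1 F2 x u)"

definition U_set :: "('a::real_inner \<Rightarrow> real) \<Rightarrow> ('a \<Rightarrow> real) \<Rightarrow> 'a \<Rightarrow> 'a set" where
  "U_set F1 F2 x = {u. \<forall>u'. S_obj F1 F2 x u \<le> S_obj F1 F2 x u'}"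

definition P_obj :: "('a::real_inner \<Rightarrow> real) \<Rightarrow> ('a \<Rightarrow> real) \<Rightarrow> real \<Rightarrow> real \<Rightarrow> 'a \<Rightarrow> 'a \<Rightarrow> 'a \<Rightarrow> ereal" where
  "P_obj F1 F2 lam mu x v w =
     ereal (F1 v + lam / 2 * (norm v)\<^sup>2) + conj_norm F2 w + ereal (1 / (2 * mu) * (norm (x - v - w))\<^sup>2)"

definition P_argmin :: "('a::real_inner \<Rightarrow> real) \<Rightarrow> ('a \<Rightarrow> real) \<Rightarrow> real \<Rightarrow> real \<Rightarrow> 'a \<Rightarrow> 'a \<times> 'a" where
  "P_argmin F1 F2 lam mu x = (THE vw. \<forall>v' w'. P_obj F1 F2 lam mu x (fst vw) (snd vw) \<le> P_obj F1 F2 lam mu x v' w')"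

definition u_lm :: "('a::real_inner \<Rightarrow> real) \<Rightarrow> ('a \<Rightarrow> real) \<Rightarrow> real \<Rightarrow> real \<Rightarrow> 'a \<Rightarrow> 'a" where
  "u_lm F1 F2 lam mu x = x - snd (P_argmin F1 F2 lam mu x)"

definition S_lm :: "('a::real_inner \<Rightarrow> real) \<Rightarrow> ('a \<Rightarrow> real) \<Rightarrow> real \<Rightarrow> real \<Rightarrow> 'a \<Rightarrow> real" where
  "S_lm F1 F2 lam mu x = real_of_ereal (INF vw. P_obj F1 F2 lam mu x (fst vw) (snd vw))"

definition gradient :: "('a::real_inner \<Rightarrow> real) \<Rightarrow> 'a \<Rightarrow> 'a" where
  "gradient f x = (THE p. (f has_derivative (\<lambda>h. p \<bullet> h)) (at x))"

definition subdiff :: "('a::real_inner \<Rightarrow> real) \<Rightarrow> 'a \<Rightarrow> 'a set" where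
  "subdiff f x = {p. \<forall>y. f y \<ge> f x + p \<bullet> (y - x)}"

end

theory Submission
  imports Defs
begin

text \<open>Problem (P) has a unique solution \<open>(v\<^sub>k, w\<^sub>k)\<close>, and \<open>p\<^sub>k = (x - v\<^sub>k - w\<^sub>k) / \<mu>\<^sub>k\<close> is the gradient
  of \<open>S\<^bsub>\<lambda>,\<mu>\<^esub>\<close> at \<open>x\<close>. Its optimality conditions say that \<open>p\<^sub>k - \<lambda>\<^sub>k v\<^sub>k \<in> \<partial>F\<^sub>1(v\<^sub>k)\<close> and that \<open>p\<^sub>k\<close>
  is normal to the dual unit ball of \<open>F\<^sub>2\<close> at \<open>w\<^sub>k\<close>; likewise \<open>(u, q) \<in> U(x) \<times> \<partial>S(x)\<close> means
  \<open>q \<in> \<partial>F\<^sub>1(u)\<close> and \<open>q\<close> is normal to that ball at \<open>x - u\<close>. Monotonicity of both operators together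
  with \<open>x - u - w\<^sub>k = v\<^sub>k - u + \<mu>\<^sub>k p\<^sub>k\<close> yields
  \<open>(\<lambda>\<^sub>k/\<mu>\<^sub>k) v\<^sub>k\<cdot>(v\<^sub>k - u) + p\<^sub>k\<cdot>(p\<^sub>k - q) \<le> 0\<close>. The pairs \<open>(v\<^sub>k, p\<^sub>k)\<close> are bounded, every cluster
  point \<open>(a, b)\<close> satisfies the limiting optimality conditions, so \<open>a \<in> U(x)\<close>, \<open>b \<in> \<partial>S(x)\<close>, and in the
  limit \<open>c a\<cdot>(a - u) + b\<cdot>(b - q) \<le> 0\<close> for all such \<open>(u, q)\<close>: this identifies \<open>a\<close> and \<open>b\<close> as the
  minimal-norm elements. Hence the whole sequence converges, and so does \<open>u\<^sub>k = v\<^sub>k + \<mu>\<^sub>k p\<^sub>k\<close>.\<close>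

lemma is_norm_zero: "is_norm N \<Longrightarrow> N 0 = 0"
  by (simp add: is_norm_def)

lemma is_norm_scaleR: "is_norm N \<Longrightarrow> N (c *\<^sub>R x) = \<bar>c\<bar> * N x"
  by (simp add: is_norm_def)

lemma is_norm_triangle: "is_norm N \<Longrightarrow> N (x + y) \<le> N x + N y"
  by (simp add: is_norm_def)

lemma is_norm_minus: "is_norm N \<Longrightarrow> N (- x) = N x"
  using is_norm_scaleR[of N "-1" x] by simp

lemma is_norm_nonneg: "is_norm N \<Longrightarrow> 0 \<le> N x"
  using is_norm_triangle[of N x "- x"] is_norm_minus[of N x] is_norm_zero[of N] by simp

lemma is_norm_eq_zero_iff: "is_norm N \<Longrightarrow> N x = 0 \<longleftrightarrow> x = 0"
  by (simp add: is_norm_def)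

lemma is_norm_convex_comb:
  "is_norm N \<Longrightarrow> 0 \<le> t \<Longrightarrow> t \<le> 1 \<Longrightarrow> N ((1 - t) *\<^sub>R a + t *\<^sub>R b) \<le> (1 - t) * N a + t * N b"
  using is_norm_triangle[of N "(1 - t) *\<^sub>R a" "t *\<^sub>R b"] is_norm_scaleR[of N "1 - t" a]
    is_norm_scaleR[of N t b] by simp

lemma is_norm_midpoint: "is_norm N \<Longrightarrow> N ((1/2) *\<^sub>R (a + b)) \<le> (N a + N b) / 2"
  using is_norm_convex_comb[of N "1/2" a b] by (simp add: scaleR_add_right)

lemma is_norm_sum: "is_norm N \<Longrightarrow> N (sum f A) \<le> (\<Sum>i\<in>A. N (f i))"
  by (induction A rule: infinite_finite_induct)
    (auto simp: is_norm_zero is_norm_nonneg intro: order_trans[OF is_norm_triangle])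

lemma is_norm_le_norm:
  fixes N :: "'a::euclidean_space \<Rightarrow> real"
  assumes "is_norm N"
  obtains C where "C > 0" "\<And>x. N x \<le> C * norm x"
proof
  define C where "C = (\<Sum>b\<in>Basis. N b) + 1"
  show "C > 0"
    unfolding C_def using is_norm_nonneg[OF assms] by (simp add: add_nonneg_pos sum_nonneg)
  fix x
  have "N x = N (\<Sum>b\<in>Basis. (x \<bullet> b) *\<^sub>R b)"
    by (simp add: euclidean_representation)
  also have "\<dots> \<le> (\<Sum>b\<in>Basis. N ((x \<bullet> b) *\<^sub>R b))"
    by (rule is_norm_sum[OF assms])
  also have "\<dots> = (\<Sum>b\<in>Basis. \<bar>x \<bullet> b\<bar> * N b)"
    by (simp add: is_norm_scaleR[OF assms])
  also have "\<dots> \<le> (\<Sum>b\<in>Basis. norm x * N b)"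
    by (intro sum_mono mult_right_mono) (auto simp: Basis_le_norm is_norm_nonneg[OF assms])
  also have "\<dots> = norm x * (\<Sum>b\<in>Basis. N b)"
    by (simp add: sum_distrib_left)
  also have "\<dots> \<le> C * norm x"
    unfolding C_def by (simp add: algebra_simps)
  finally show "N x \<le> C * norm x" .
qed

lemma is_norm_continuous_on:
  fixes N :: "'a::euclidean_space \<Rightarrow> real"
  assumes "is_norm N"
  shows "continuous_on S N"
proof -
  obtain C where C: "C > 0" "\<And>x. N x \<le> C * norm x"
    using is_norm_le_norm[OF assms] by blast
  have "\<bar>N x - N y\<bar> \<le> N (x - y)" for x y
    using is_norm_triangle[OF assms, of "x - y" y] is_norm_triangle[OF assms, of "y - x" x]
      is_norm_minus[OF assms, of "x - y"] by (simp add: abs_le_iff)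
  then have "C-lipschitz_on S N"
    using C by (intro lipschitz_onI) (auto simp: dist_real_def dist_norm intro: order_trans)
  then show ?thesis
    by (rule lipschitz_on_continuous_on)
qed

lemma is_norm_ge_norm:
  fixes N :: "'a::euclidean_space \<Rightarrow> real"
  assumes "is_norm N"
  obtains m where "m > 0" "\<And>x. m * norm x \<le> N x"
proof -
  obtain b :: 'a where "b \<in> Basis"
    using nonempty_Basis by blast
  then have "sphere (0::'a) 1 \<noteq> {}"
    by auto
  then obtain z where z: "z \<in> sphere 0 1" "\<And>y. y \<in> sphere 0 1 \<Longrightarrow> N z \<le> N y"
    using continuous_attains_inf[OF compact_sphere _ is_norm_continuous_on[OF assms]] by blast
  then have "N z > 0"
    using is_norm_nonneg[OF assms, of z] is_norm_eq_zero_iff[OF assms, of z] by fastforce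
  moreover have "N z * norm x \<le> N x" for x
  proof (cases "x = 0")
    case False
    then have "N z \<le> N ((1 / norm x) *\<^sub>R x)"
      by (intro z(2)) simp
    then show ?thesis
      using False by (simp add: is_norm_scaleR[OF assms] field_simps)
  qed (simp add: is_norm_zero[OF assms])
  ultimately show thesis
    using that by blast
qed

definition dual_ball :: "('a::real_inner \<Rightarrow> real) \<Rightarrow> 'a set" where
  "dual_ball N = {w. dual_norm N w \<le> 1}"

lemma mem_dual_ball_iff:
  fixes N :: "'a::euclidean_space \<Rightarrow> real"
  assumes "is_norm N"
  shows "w \<in> dual_ball N \<longleftrightarrow> (\<forall>u. N u \<le> 1 \<longrightarrow> w \<bullet> u \<le> 1)"
proof -
  obtain m where m: "m > 0" "\<And>x. m * norm x \<le> N x"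
    using is_norm_ge_norm[OF assms] by blast
  have "0 \<in> {w \<bullet> u | u. N u \<le> 1}"
    using is_norm_zero[OF assms] by (auto intro!: exI[of _ 0])
  then have ne: "{w \<bullet> u | u. N u \<le> 1} \<noteq> {}"
    by blast
  have "w \<bullet> u \<le> norm w / m" if "N u \<le> 1" for u
  proof -
    have "norm u \<le> 1 / m"
      using m that by (simp add: field_simps) (meson order_trans)
    then have "norm w * norm u \<le> norm w * (1 / m)"
      by (rule mult_left_mono) simp
    then show ?thesis
      using norm_cauchy_schwarz[of w u] by simp
  qed
  then have "bdd_above {w \<bullet> u | u. N u \<le> 1}"
    by (intro bdd_aboveI) blast
  then show ?thesis
    unfolding dual_ball_def dual_norm_def using cSup_le_iff[OF ne] by blast
qed

lemma dual_ball_eq_Inter: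
  "is_norm (N::'a::euclidean_space \<Rightarrow> real) \<Longrightarrow> dual_ball N = (\<Inter>u\<in>{u. N u \<le> 1}. {w. u \<bullet> w \<le> 1})"
  by (auto simp: mem_dual_ball_iff inner_commute)

lemma zero_in_dual_ball: "is_norm (N::'a::euclidean_space \<Rightarrow> real) \<Longrightarrow> 0 \<in> dual_ball N"
  by (simp add: mem_dual_ball_iff)

lemma closed_dual_ball: "is_norm (N::'a::euclidean_space \<Rightarrow> real) \<Longrightarrow> closed (dual_ball N)"
  by (auto simp: dual_ball_eq_Inter intro!: closed_halfspace_le)

lemma convex_dual_ball: "is_norm (N::'a::euclidean_space \<Rightarrow> real) \<Longrightarrow> convex (dual_ball N)"
  by (auto simp: dual_ball_eq_Inter intro!: convex_INT convex_halfspace_le)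

lemma bounded_dual_ball:
  fixes N :: "'a::euclidean_space \<Rightarrow> real"
  assumes "is_norm N"
  shows "bounded (dual_ball N)"
proof -
  obtain C where C: "C > 0" "\<And>x. N x \<le> C * norm x"
    using is_norm_le_norm[OF assms] by blast
  have "norm w \<le> C" if w: "w \<in> dual_ball N" and "w \<noteq> 0" for w
  proof -
    define u where "u = (1 / (C * norm w)) *\<^sub>R w"
    have "N u \<le> 1"
      unfolding u_def using C \<open>w \<noteq> 0\<close> C(2)[of w] by (simp add: is_norm_scaleR[OF assms] field_simps)
    then have "w \<bullet> u \<le> 1"
      using w mem_dual_ball_iff[OF assms] by blast
    moreover have "w \<bullet> u = norm w / C"
      unfolding u_def using \<open>w \<noteq> 0\<close> C(1) by (simp add: dot_square_norm power2_eq_square)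
    ultimately show ?thesis
      using C(1) by (simp add: field_simps)
  qed
  then show ?thesis
    unfolding bounded_iff using C(1) by (metis less_le norm_zero)
qed

lemma compact_dual_ball: "is_norm (N::'a::euclidean_space \<Rightarrow> real) \<Longrightarrow> compact (dual_ball N)"
  by (simp add: compact_eq_bounded_closed bounded_dual_ball closed_dual_ball)

lemma conj_norm_eq: "is_norm (N::'a::euclidean_space \<Rightarrow> real) \<Longrightarrow> conj_norm N w = (if w \<in> dual_ball N then 0 else \<infinity>)"
  by (simp add: conj_norm_def dual_ball_def)

lemma subgradient_in_dual_ball:
  fixes N :: "'a::euclidean_space \<Rightarrow> real"
  assumes "is_norm N" and "\<And>h. N v + g \<bullet> h \<le> N (v + h)"
  shows "g \<in> dual_ball N"
  unfolding mem_dual_ball_iff[OF assms(1)]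
  using assms(2) is_norm_triangle[OF assms(1), of v] by (meson add_le_cancel_left order_trans)

definition P_val :: "('a::real_inner \<Rightarrow> real) \<Rightarrow> real \<Rightarrow> real \<Rightarrow> 'a \<Rightarrow> 'a \<Rightarrow> 'a \<Rightarrow> real" where
  "P_val F1 lam mu y v w = F1 v + lam / 2 * (norm v)\<^sup>2 + 1 / (2 * mu) * (norm (y - v - w))\<^sup>2"

lemma P_obj_eq_P_val:
  "is_norm (F2::'a::euclidean_space \<Rightarrow> real) \<Longrightarrow>
    P_obj F1 F2 lam mu y v w = (if w \<in> dual_ball F2 then ereal (P_val F1 lam mu y v w) else \<infinity>)"
  by (simp add: P_obj_def conj_norm_eq P_val_def)

lemma norm_add_scaleR_sq:
  fixes a b :: "'a::real_inner"
  shows "(norm (a + t *\<^sub>R b))\<^sup>2 = (norm a)\<^sup>2 + 2 * t * (a \<bullet> b) + t\<^sup>2 * (norm b)\<^sup>2"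
  unfolding power2_norm_eq_inner
  by (simp add: inner_commute algebra_simps power2_eq_square)

lemma norm_midpoint_sq:
  fixes a b :: "'a::real_inner"
  shows "(norm ((1/2) *\<^sub>R (a + b)))\<^sup>2 = ((norm a)\<^sup>2 + (norm b)\<^sup>2) / 2 - (norm (a - b))\<^sup>2 / 4"
  unfolding power2_norm_eq_inner
  by (simp add: inner_add_left inner_add_right inner_diff_left inner_diff_right inner_commute
      field_simps)

lemma P_val_midpoint:
  fixes F1 :: "'a::real_inner \<Rightarrow> real" and y1 y2 v1 v2 w1 w2 :: 'a
  assumes "is_norm F1"
  defines "r1 \<equiv> y1 - v1 - w1" and "r2 \<equiv> y2 - v2 - w2"
  shows "P_val F1 lam mu ((1/2) *\<^sub>R (y1 + y2)) ((1/2) *\<^sub>R (v1 + v2)) ((1/2) *\<^sub>R (w1 + w2))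
      + lam / 2 * ((norm (v1 - v2))\<^sup>2 / 4) + 1 / (2 * mu) * ((norm (r1 - r2))\<^sup>2 / 4)
    \<le> (P_val F1 lam mu y1 v1 w1 + P_val F1 lam mu y2 v2 w2) / 2"
proof -
  have "(1/2) *\<^sub>R (y1 + y2) - (1/2) *\<^sub>R (v1 + v2) - (1/2) *\<^sub>R (w1 + w2) = (1/2) *\<^sub>R (r1 + r2)"
    unfolding r1_def r2_def by (simp add: algebra_simps)
  then have "P_val F1 lam mu ((1/2) *\<^sub>R (y1 + y2)) ((1/2) *\<^sub>R (v1 + v2)) ((1/2) *\<^sub>R (w1 + w2))
      = F1 ((1/2) *\<^sub>R (v1 + v2))
        + lam / 2 * (((norm v1)\<^sup>2 + (norm v2)\<^sup>2) / 2 - (norm (v1 - v2))\<^sup>2 / 4)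
        + 1 / (2 * mu) * (((norm r1)\<^sup>2 + (norm r2)\<^sup>2) / 2 - (norm (r1 - r2))\<^sup>2 / 4)"
    unfolding P_val_def by (simp only: norm_midpoint_sq)
  moreover have "P_val F1 lam mu y1 v1 w1 = F1 v1 + lam / 2 * (norm v1)\<^sup>2 + 1 / (2 * mu) * (norm r1)\<^sup>2"
    and "P_val F1 lam mu y2 v2 w2 = F1 v2 + lam / 2 * (norm v2)\<^sup>2 + 1 / (2 * mu) * (norm r2)\<^sup>2"
    unfolding P_val_def r1_def r2_def by simp_all
  ultimately show ?thesis
    using is_norm_midpoint[OF assms(1), of v1 v2] by (simp only: right_diff_distrib distrib_left) argo
qed

lemma nonneg_of_nonneg_perturbation:
  fixes A K :: real
  assumes "\<And>t. 0 < t \<Longrightarrow> t \<le> 1 \<Longrightarrow> 0 \<le> A + t * K"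
  shows "0 \<le> A"
proof (rule tendsto_lowerbound)
  show "((\<lambda>t. A + t * K) \<longlongrightarrow> A) (at_right 0)"
    by (auto intro!: tendsto_eq_intros)
  show "\<forall>\<^sub>F t in at_right 0. 0 \<le> A + t * K"
    unfolding eventually_at_right_field using assms by (intro exI[of _ 1]) auto
qed simp

lemma has_derivative_if_quadratic_remainder:
  fixes f :: "'a::real_inner \<Rightarrow> real"
  assumes "\<And>h. \<bar>f (y + h) - f y - p \<bullet> h\<bar> \<le> C * (norm h)\<^sup>2"
  shows "(f has_derivative (\<lambda>h. p \<bullet> h)) (at y)"
  unfolding has_derivative_at_alt
proof (intro conjI allI impI bounded_linear_inner_right)
  fix e :: real
  assume "e > 0"
  show "\<exists>d>0. \<forall>z. norm (z - y) < d \<longrightarrow> norm (f z - f y - p \<bullet> (z - y)) \<le> e * norm (z - y)"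
  proof (intro exI[of _ "e / (\<bar>C\<bar> + 1)"] conjI allI impI)
    show "e / (\<bar>C\<bar> + 1) > 0"
      using \<open>e > 0\<close> by simp
    fix z
    assume "norm (z - y) < e / (\<bar>C\<bar> + 1)"
    then have "(\<bar>C\<bar> + 1) * norm (z - y) \<le> e"
      by (simp add: field_simps)
    then have "(\<bar>C\<bar> + 1) * norm (z - y) * norm (z - y) \<le> e * norm (z - y)"
      by (simp add: mult_right_mono)
    moreover have "\<bar>f z - f y - p \<bullet> (z - y)\<bar> \<le> C * (norm (z - y))\<^sup>2"
      using assms[of "z - y"] by simp
    ultimately show "norm (f z - f y - p \<bullet> (z - y)) \<le> e * norm (z - y)"
      by (simp add: power2_eq_square algebra_simps)
        (smt (verit) mult_nonneg_nonneg norm_ge_zero abs_ge_self mult_right_mono)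
  qed
qed

lemma gradient_eq_if_has_derivative:
  assumes "(f has_derivative (\<lambda>h. p \<bullet> h)) (at x)"
  shows "gradient f x = p"
  unfolding gradient_def
proof (rule the_equality)
  fix q
  assume "(f has_derivative (\<lambda>h. q \<bullet> h)) (at x)"
  then have "(\<lambda>h. q \<bullet> h) = (\<lambda>h. p \<bullet> h)"
    using assms by (rule has_derivative_unique)
  then show "q = p"
    by (metis vector_eq_rdot)
qed (fact assms)

lemma closest_point_0_eq:
  fixes S :: "'a::{real_inner,heine_borel} set"
  assumes a: "a \<in> S" and obtuse: "\<And>u. u \<in> S \<Longrightarrow> a \<bullet> (a - u) \<le> 0"
  shows "closest_point S 0 = a"
proof -
  have min: "norm a \<le> norm u" if "u \<in> S" for u
  proof -
    have "norm a * norm a \<le> norm a * norm u"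
      using obtuse[OF that] norm_cauchy_schwarz[of a u]
      by (simp add: inner_diff_right power2_norm_eq_inner[symmetric] power2_eq_square)
    then show ?thesis
      by (cases "a = 0") auto
  qed
  define c where "c = closest_point S 0"
  have "c \<in> S \<and> (\<forall>y\<in>S. dist 0 c \<le> dist 0 y)"
    unfolding c_def closest_point_def by (rule someI[of _ a]) (simp add: a min)
  then have c: "c \<in> S" "norm c \<le> norm a"
    using a by auto
  have "(norm (a - c))\<^sup>2 = (norm c)\<^sup>2 - (norm a)\<^sup>2 + 2 * (a \<bullet> (a - c))"
    by (simp add: power2_norm_eq_inner inner_diff_left inner_diff_right inner_commute)
  also have "\<dots> \<le> 0"
    using obtuse[OF c(1)] power_mono[OF c(2) norm_ge_zero, of 2] by linarith
  finally show ?thesis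
    unfolding c_def[symmetric] by simp
qed

lemma LIMSEQ_if_subseq_limits_eq:
  fixes z :: "nat \<Rightarrow> 'a::heine_borel"
  assumes bounded: "bounded (range z)"
    and limits: "\<And>r l. strict_mono r \<Longrightarrow> (z \<circ> r) \<longlonglongrightarrow> l \<Longrightarrow> l = T"
  shows "z \<longlonglongrightarrow> T"
proof (rule ccontr)
  assume "\<not> z \<longlonglongrightarrow> T"
  then obtain e where "e > 0" and "\<forall>N. \<exists>n\<ge>N. \<not> dist (z n) T < e"
    unfolding lim_sequentially by blast
  then have "infinite {n. \<not> dist (z n) T < e}"
    unfolding infinite_nat_iff_unbounded_le by blast
  then obtain r :: "nat \<Rightarrow> nat" where r: "strict_mono r" and far: "\<And>n. \<not> dist (z (r n)) T < e"
    using infinite_enumerate by blast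
  have "bounded (range (z \<circ> r))"
    using bounded by (rule bounded_subset) auto
  then obtain l r' where r': "strict_mono r'" and lim: "((z \<circ> r) \<circ> r') \<longlonglongrightarrow> l"
    using bounded_imp_convergent_subsequence by blast
  have "l = T"
    using limits[OF strict_mono_o[OF r r']] lim by (simp add: o_assoc)
  then obtain N where "\<forall>n\<ge>N. dist (((z \<circ> r) \<circ> r') n) T < e"
    using lim \<open>e > 0\<close> unfolding lim_sequentially by blast
  then show False
    using far[of "r' N"] by auto
qed

locale norm_pair =
  fixes F1 F2 :: "'a::euclidean_space \<Rightarrow> real"
  assumes norm1: "is_norm F1" and norm2: "is_norm F2"
begin

lemma S_obj_eq: "S_obj F1 F2 x u = (if x - u \<in> dual_ball F2 then ereal (F1 u) else \<infinity>)"
  by (simp add: S_obj_def conj_norm_eq[OF norm2])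

lemma S_fun_bounds:
  assumes "x - u \<in> dual_ball F2" and "\<And>u'. x - u' \<in> dual_ball F2 \<Longrightarrow> L \<le> F1 u'"
  shows "L \<le> S_fun F1 F2 x" and "S_fun F1 F2 x \<le> F1 u"
proof -
  have "(INF u. S_obj F1 F2 x u) \<le> ereal (F1 u)"
    using INF_lower[of u UNIV "S_obj F1 F2 x"] assms(1) by (simp add: S_obj_eq)
  moreover have "ereal L \<le> (INF u. S_obj F1 F2 x u)"
    by (rule INF_greatest) (simp add: S_obj_eq assms(2))
  ultimately show "L \<le> S_fun F1 F2 x" "S_fun F1 F2 x \<le> F1 u"
    unfolding S_fun_def by (cases "INF u. S_obj F1 F2 x u"; simp)+
qed

lemma S_fun_le: "x - u \<in> dual_ball F2 \<Longrightarrow> S_fun F1 F2 x \<le> F1 u"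
  using S_fun_bounds(2)[of x u 0] is_norm_nonneg[OF norm1] by blast

lemma S_fun_ge: "(\<And>u. x - u \<in> dual_ball F2 \<Longrightarrow> L \<le> F1 u) \<Longrightarrow> L \<le> S_fun F1 F2 x"
  using S_fun_bounds(1)[of x x] zero_in_dual_ball[OF norm2] by simp

lemma mem_U_set_iff:
  "u \<in> U_set F1 F2 x \<longleftrightarrow> x - u \<in> dual_ball F2 \<and> (\<forall>u'. x - u' \<in> dual_ball F2 \<longrightarrow> F1 u \<le> F1 u')"
proof
  assume "u \<in> U_set F1 F2 x"
  then have min: "\<And>u'. S_obj F1 F2 x u \<le> S_obj F1 F2 x u'"
    unfolding U_set_def by blast
  then have "x - u \<in> dual_ball F2"
    using min[of x] zero_in_dual_ball[OF norm2] by (simp add: S_obj_eq split: if_splits)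
  moreover have "F1 u \<le> F1 u'" if "x - u' \<in> dual_ball F2" for u'
    using min[of u'] that calculation by (simp add: S_obj_eq)
  ultimately show "x - u \<in> dual_ball F2 \<and> (\<forall>u'. x - u' \<in> dual_ball F2 \<longrightarrow> F1 u \<le> F1 u')"
    by blast
qed (auto simp: U_set_def S_obj_eq)

lemma S_fun_eq_if_mem_U_set: "u \<in> U_set F1 F2 x \<Longrightarrow> S_fun F1 F2 x = F1 u"
  using S_fun_le S_fun_ge by (meson mem_U_set_iff order_antisym)

lemma optimality_if_mem_U_set_subdiff:
  assumes u: "u \<in> U_set F1 F2 x" and q: "q \<in> subdiff (S_fun F1 F2) x"
  shows "F1 u + q \<bullet> h \<le> F1 (u + h)" and "w \<in> dual_ball F2 \<Longrightarrow> q \<bullet> (w - (x - u)) \<le> 0"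
proof -
  have Sx: "S_fun F1 F2 x = F1 u"
    using S_fun_eq_if_mem_U_set[OF u] .
  have sub: "\<And>y. S_fun F1 F2 x + q \<bullet> (y - x) \<le> S_fun F1 F2 y"
    using q unfolding subdiff_def by blast
  have "S_fun F1 F2 (x + h) \<le> F1 (u + h)"
    using S_fun_le[of "x + h" "u + h"] u by (simp add: mem_U_set_iff)
  then show "F1 u + q \<bullet> h \<le> F1 (u + h)"
    using sub[of "x + h"] Sx by simp
  assume "w \<in> dual_ball F2"
  then have "S_fun F1 F2 (u + w) \<le> F1 u"
    using S_fun_le[of "u + w" u] by simp
  then show "q \<bullet> (w - (x - u)) \<le> 0"
    using sub[of "u + w"] Sx by (simp add: algebra_simps)
qed

lemma mem_U_set_subdiff_if_optimality:
  assumes sub: "\<And>h. F1 u + q \<bullet> h \<le> F1 (u + h)" and xu: "x - u \<in> dual_ball F2"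
    and normal: "\<And>w. w \<in> dual_ball F2 \<Longrightarrow> q \<bullet> (w - (x - u)) \<le> 0"
  shows "u \<in> U_set F1 F2 x" and "q \<in> subdiff (S_fun F1 F2) x"
proof -
  have key: "F1 u + q \<bullet> (y - x) \<le> F1 u'" if "y - u' \<in> dual_ball F2" for y u'
    using sub[of "u' - u"] normal[OF that] by (simp add: inner_diff_right)
  show U: "u \<in> U_set F1 F2 x"
    using key[of x] xu by (simp add: mem_U_set_iff)
  show "q \<in> subdiff (S_fun F1 F2) x"
    unfolding subdiff_def S_fun_eq_if_mem_U_set[OF U] using key by (auto intro: S_fun_ge)
qed

end

locale smoothing = norm_pair +
  fixes lam mu :: real
  assumes lam_pos: "lam > 0" and mu_pos: "mu > 0"
begin

lemma P_val_min_exists: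
  obtains v w where "w \<in> dual_ball F2"
    and "\<And>v' w'. w' \<in> dual_ball F2 \<Longrightarrow> P_val F1 lam mu y v w \<le> P_val F1 lam mu y v' w'"
proof -
  define q0 where "q0 = P_val F1 lam mu y 0 0"
  have "q0 \<ge> 0"
    using mu_pos by (simp add: q0_def P_val_def is_norm_zero[OF norm1])
  define R where "R = sqrt (2 * q0 / lam)"
  have R: "R \<ge> 0" "lam / 2 * R\<^sup>2 = q0"
    unfolding R_def using \<open>q0 \<ge> 0\<close> lam_pos by simp_all
  define K where "K = cball (0::'a) R \<times> dual_ball F2"
  have "compact K"
    unfolding K_def by (intro compact_Times compact_cball compact_dual_ball[OF norm2])
  moreover have K0: "(0, 0) \<in> K"
    unfolding K_def using R zero_in_dual_ball[OF norm2] by simp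
  moreover have "continuous_on K (\<lambda>z. P_val F1 lam mu y (fst z) (snd z))"
    unfolding P_val_def
    by (intro continuous_intros continuous_on_compose2[OF is_norm_continuous_on[OF norm1]]) auto
  ultimately obtain z where z: "z \<in> K" "\<And>z'. z' \<in> K \<Longrightarrow> P_val F1 lam mu y (fst z) (snd z) \<le> P_val F1 lam mu y (fst z') (snd z')"
    using continuous_attains_inf[of K] by blast
  have "P_val F1 lam mu y (fst z) (snd z) \<le> P_val F1 lam mu y v' w'" if w': "w' \<in> dual_ball F2" for v' w'
  proof (cases "norm v' \<le> R")
    case True
    then show ?thesis
      using z(2)[of "(v', w')"] w' by (simp add: K_def)
  next
    case False
    text \<open>Outside the ball of radius \<open>R\<close> the quadratic term alone exceeds the value at the origin.\<close>
    have "P_val F1 lam mu y (fst z) (snd z) \<le> q0"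
      using z(2)[OF K0] by (simp add: q0_def)
    also have "q0 < lam / 2 * (norm v')\<^sup>2"
      unfolding R(2)[symmetric] using False lam_pos R(1)
      by (intro mult_strict_left_mono power_strict_mono) auto
    also have "\<dots> \<le> P_val F1 lam mu y v' w'"
      unfolding P_val_def using is_norm_nonneg[OF norm1, of v'] mu_pos by simp
    finally show ?thesis
      by simp
  qed
  moreover have "snd z \<in> dual_ball F2"
    using z(1) by (auto simp: K_def)
  ultimately show thesis
    using that by blast
qed

lemma P_val_min_unique:
  assumes w1: "w1 \<in> dual_ball F2" and min1: "\<And>v' w'. w' \<in> dual_ball F2 \<Longrightarrow> P_val F1 lam mu y v1 w1 \<le> P_val F1 lam mu y v' w'"
    and w2: "w2 \<in> dual_ball F2" and min2: "\<And>v' w'. w' \<in> dual_ball F2 \<Longrightarrow> P_val F1 lam mu y v2 w2 \<le> P_val F1 lam mu y v' w'"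
  shows "v1 = v2 \<and> w1 = w2"
proof -
  define gap where "gap = lam / 2 * ((norm (v1 - v2))\<^sup>2 / 4)
    + 1 / (2 * mu) * ((norm ((y - v1 - w1) - (y - v2 - w2)))\<^sup>2 / 4)"
  have "(1/2) *\<^sub>R w1 + (1/2) *\<^sub>R w2 \<in> dual_ball F2"
    using convexD[OF convex_dual_ball[OF norm2] w1 w2, of "1/2" "1/2"] by simp
  then have "P_val F1 lam mu y v1 w1 \<le> P_val F1 lam mu y ((1/2) *\<^sub>R (v1 + v2)) ((1/2) *\<^sub>R (w1 + w2))"
    by (simp add: min1 scaleR_add_right)
  moreover have "P_val F1 lam mu y ((1/2) *\<^sub>R (v1 + v2)) ((1/2) *\<^sub>R (w1 + w2)) + gap
      \<le> (P_val F1 lam mu y v1 w1 + P_val F1 lam mu y v2 w2) / 2"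
    using P_val_midpoint[OF norm1, of lam mu y y v1 v2 w1 w2] by (simp add: gap_def)
  moreover have "P_val F1 lam mu y v1 w1 = P_val F1 lam mu y v2 w2"
    using min1[OF w2, of v2] min2[OF w1, of v1] by simp
  ultimately have "gap \<le> 0"
    by simp
  moreover have "lam / 2 * ((norm (v1 - v2))\<^sup>2 / 4) \<ge> 0"
    and "1 / (2 * mu) * ((norm ((y - v1 - w1) - (y - v2 - w2)))\<^sup>2 / 4) \<ge> 0"
    using lam_pos mu_pos by simp_all
  ultimately have "norm (v1 - v2) = 0" and "norm ((y - v1 - w1) - (y - v2 - w2)) = 0"
    unfolding gap_def using lam_pos mu_pos by (smt (verit) mult_pos_pos zero_less_power2 divide_pos_pos)+
  then show ?thesis
    by auto
qed

definition v_opt :: "'a \<Rightarrow> 'a" where "v_opt y = fst (P_argmin F1 F2 lam mu y)"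
definition w_opt :: "'a \<Rightarrow> 'a" where "w_opt y = snd (P_argmin F1 F2 lam mu y)"
definition p_opt :: "'a \<Rightarrow> 'a" where "p_opt y = (1 / mu) *\<^sub>R (y - v_opt y - w_opt y)"

lemma P_argmin_minimizes:
  shows w_opt_in_dual_ball: "w_opt y \<in> dual_ball F2"
    and P_val_opt_le: "w' \<in> dual_ball F2 \<Longrightarrow> P_val F1 lam mu y (v_opt y) (w_opt y) \<le> P_val F1 lam mu y v' w'"
proof -
  obtain v w where w: "w \<in> dual_ball F2"
    and min: "\<And>v' w'. w' \<in> dual_ball F2 \<Longrightarrow> P_val F1 lam mu y v w \<le> P_val F1 lam mu y v' w'"
    using P_val_min_exists by blast
  have "P_argmin F1 F2 lam mu y = (v, w)"
    unfolding P_argmin_def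
  proof (rule the_equality)
    show "\<forall>v' w'. P_obj F1 F2 lam mu y (fst (v, w)) (snd (v, w)) \<le> P_obj F1 F2 lam mu y v' w'"
      using w min by (simp add: P_obj_eq_P_val[OF norm2])
    fix vw
    assume vw: "\<forall>v' w'. P_obj F1 F2 lam mu y (fst vw) (snd vw) \<le> P_obj F1 F2 lam mu y v' w'"
    have vw_ball: "snd vw \<in> dual_ball F2"
      using vw[rule_format, of v w] w by (simp add: P_obj_eq_P_val[OF norm2] split: if_splits)
    have vw_min: "P_val F1 lam mu y (fst vw) (snd vw) \<le> P_val F1 lam mu y v' w'"
      if "w' \<in> dual_ball F2" for v' w'
      using vw[rule_format, of v' w'] that vw_ball by (simp add: P_obj_eq_P_val[OF norm2])
    show "vw = (v, w)"
      using P_val_min_unique[OF vw_ball vw_min w min] by (simp add: prod_eq_iff)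
  qed
  then show "w_opt y \<in> dual_ball F2"
    and "w' \<in> dual_ball F2 \<Longrightarrow> P_val F1 lam mu y (v_opt y) (w_opt y) \<le> P_val F1 lam mu y v' w'"
    using w min by (simp_all add: v_opt_def w_opt_def)
qed

lemma S_lm_eq: "S_lm F1 F2 lam mu y = P_val F1 lam mu y (v_opt y) (w_opt y)"
proof -
  have "(INF vw. P_obj F1 F2 lam mu y (fst vw) (snd vw)) = ereal (P_val F1 lam mu y (v_opt y) (w_opt y))"
  proof (rule antisym)
    show "(INF vw. P_obj F1 F2 lam mu y (fst vw) (snd vw)) \<le> ereal (P_val F1 lam mu y (v_opt y) (w_opt y))"
      by (rule INF_lower2[of "(v_opt y, w_opt y)"])
        (simp_all add: P_obj_eq_P_val[OF norm2] w_opt_in_dual_ball)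
    show "ereal (P_val F1 lam mu y (v_opt y) (w_opt y)) \<le> (INF vw. P_obj F1 F2 lam mu y (fst vw) (snd vw))"
      by (intro INF_greatest) (auto simp: P_obj_eq_P_val[OF norm2] P_val_opt_le)
  qed
  then show ?thesis
    by (simp add: S_lm_def)
qed

lemma u_lm_eq: "u_lm F1 F2 lam mu y = v_opt y + mu *\<^sub>R p_opt y"
  using mu_pos by (simp add: u_lm_def p_opt_def w_opt_def)

text \<open>Both first-order conditions follow by comparing the objective with its value along a short
  segment and letting the segment shrink.\<close>

lemma subgradient_v_opt: "F1 (v_opt y) + (p_opt y - lam *\<^sub>R v_opt y) \<bullet> h \<le> F1 (v_opt y + h)"
proof -
  define v where "v = v_opt y"
  define r where "r = y - v - w_opt y"
  have "0 \<le> (F1 (v + h) - F1 v - (1 / mu) * (r \<bullet> h) + lam * (v \<bullet> h)) + t * ((lam / 2 + 1 / (2 * mu)) * (norm h)\<^sup>2)"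
    if t: "0 < t" "t \<le> 1" for t
  proof -
    have "y - (v + t *\<^sub>R h) - w_opt y = r + (- t) *\<^sub>R h"
      unfolding r_def by (simp add: algebra_simps)
    then have "P_val F1 lam mu y (v + t *\<^sub>R h) (w_opt y) = F1 (v + t *\<^sub>R h)
        + lam / 2 * ((norm v)\<^sup>2 + 2 * t * (v \<bullet> h) + t\<^sup>2 * (norm h)\<^sup>2)
        + 1 / (2 * mu) * ((norm r)\<^sup>2 + 2 * (- t) * (r \<bullet> h) + (- t)\<^sup>2 * (norm h)\<^sup>2)"
      by (simp only: P_val_def norm_add_scaleR_sq)
    moreover have "P_val F1 lam mu y v (w_opt y) \<le> P_val F1 lam mu y (v + t *\<^sub>R h) (w_opt y)"
      unfolding v_def by (rule P_val_opt_le[OF w_opt_in_dual_ball])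
    moreover have "P_val F1 lam mu y v (w_opt y) = F1 v + lam / 2 * (norm v)\<^sup>2 + 1 / (2 * mu) * (norm r)\<^sup>2"
      unfolding P_val_def r_def ..
    moreover have "F1 (v + t *\<^sub>R h) \<le> (1 - t) * F1 v + t * F1 (v + h)"
      using is_norm_convex_comb[OF norm1, of t v "v + h"] t by (simp add: algebra_simps)
    ultimately have "F1 v + lam / 2 * (norm v)\<^sup>2 + 1 / (2 * mu) * (norm r)\<^sup>2 \<le>
        (1 - t) * F1 v + t * F1 (v + h) + lam / 2 * ((norm v)\<^sup>2 + 2 * t * (v \<bullet> h) + t\<^sup>2 * (norm h)\<^sup>2)
        + 1 / (2 * mu) * ((norm r)\<^sup>2 + 2 * (- t) * (r \<bullet> h) + (- t)\<^sup>2 * (norm h)\<^sup>2)"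
      by linarith
    then have "0 \<le> t * ((F1 (v + h) - F1 v - (1 / mu) * (r \<bullet> h) + lam * (v \<bullet> h))
        + t * ((lam / 2 + 1 / (2 * mu)) * (norm h)\<^sup>2))"
      by (simp add: algebra_simps power2_eq_square)
    then show ?thesis
      using t by (simp add: zero_le_mult_iff)
  qed
  then have "0 \<le> F1 (v + h) - F1 v - (1 / mu) * (r \<bullet> h) + lam * (v \<bullet> h)"
    by (rule nonneg_of_nonneg_perturbation)
  then show ?thesis
    unfolding v_def r_def p_opt_def by (simp add: inner_diff_left)
qed

lemma normal_p_opt: "w \<in> dual_ball F2 \<Longrightarrow> p_opt y \<bullet> (w - w_opt y) \<le> 0"
proof -
  assume w: "w \<in> dual_ball F2"
  define r d where "r = y - v_opt y - w_opt y" and "d = w - w_opt y"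
  have "0 \<le> - 2 * (r \<bullet> d) + t * (norm d)\<^sup>2" if t: "0 < t" "t \<le> 1" for t
  proof -
    have "(1 - t) *\<^sub>R w_opt y + t *\<^sub>R w \<in> dual_ball F2"
      using convexD_alt[OF convex_dual_ball[OF norm2] w_opt_in_dual_ball w] t by simp
    then have "P_val F1 lam mu y (v_opt y) (w_opt y) \<le> P_val F1 lam mu y (v_opt y) (w_opt y + t *\<^sub>R d)"
      unfolding d_def by (intro P_val_opt_le) (simp add: algebra_simps)
    moreover have "y - v_opt y - (w_opt y + t *\<^sub>R d) = r + (- t) *\<^sub>R d"
      unfolding r_def by (simp add: algebra_simps)
    then have "(norm (y - v_opt y - (w_opt y + t *\<^sub>R d)))\<^sup>2 = (norm r)\<^sup>2 + 2 * (- t) * (r \<bullet> d) + (- t)\<^sup>2 * (norm d)\<^sup>2"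
      by (simp only: norm_add_scaleR_sq)
    ultimately have "(norm r)\<^sup>2 \<le> (norm r)\<^sup>2 + 2 * (- t) * (r \<bullet> d) + (- t)\<^sup>2 * (norm d)\<^sup>2"
      unfolding P_val_def r_def[symmetric] using mu_pos by (simp add: divide_le_cancel)
    then have "0 \<le> t * (- 2 * (r \<bullet> d) + t * (norm d)\<^sup>2)"
      by (simp add: algebra_simps power2_eq_square)
    then show ?thesis
      using t by (simp add: zero_le_mult_iff)
  qed
  then have "0 \<le> - 2 * (r \<bullet> d)"
    by (rule nonneg_of_nonneg_perturbation)
  then show ?thesis
    unfolding p_opt_def r_def[symmetric] d_def[symmetric] using mu_pos
    by (simp add: divide_nonpos_pos)
qed

lemma F1_v_opt_le: "F1 (v_opt y) \<le> F1 y + lam / 2 * (norm y)\<^sup>2"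
proof -
  have "F1 (v_opt y) \<le> P_val F1 lam mu y (v_opt y) (w_opt y)"
    unfolding P_val_def using lam_pos mu_pos by simp
  also have "\<dots> \<le> P_val F1 lam mu y y 0"
    by (rule P_val_opt_le[OF zero_in_dual_ball[OF norm2]])
  finally show ?thesis
    by (simp add: P_val_def)
qed

lemma S_lm_le_quadratic:
  "S_lm F1 F2 lam mu (y + h) \<le> S_lm F1 F2 lam mu y + p_opt y \<bullet> h + 1 / (2 * mu) * (norm h)\<^sup>2"
proof -
  define r where "r = y - v_opt y - w_opt y"
  have "y + h - v_opt y - w_opt y = r + 1 *\<^sub>R h"
    unfolding r_def by (simp add: algebra_simps)
  then have "P_val F1 lam mu (y + h) (v_opt y) (w_opt y) = F1 (v_opt y) + lam / 2 * (norm (v_opt y))\<^sup>2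
      + 1 / (2 * mu) * ((norm r)\<^sup>2 + 2 * 1 * (r \<bullet> h) + 1\<^sup>2 * (norm h)\<^sup>2)"
    by (simp only: P_val_def norm_add_scaleR_sq)
  moreover have "S_lm F1 F2 lam mu (y + h) \<le> P_val F1 lam mu (y + h) (v_opt y) (w_opt y)"
    unfolding S_lm_eq by (rule P_val_opt_le[OF w_opt_in_dual_ball])
  moreover have "S_lm F1 F2 lam mu y + p_opt y \<bullet> h = F1 (v_opt y) + lam / 2 * (norm (v_opt y))\<^sup>2
      + 1 / (2 * mu) * ((norm r)\<^sup>2 + 2 * (r \<bullet> h))"
    unfolding S_lm_eq P_val_def p_opt_def r_def[symmetric] by (simp add: algebra_simps)
  ultimately show ?thesis
    by (simp add: algebra_simps)
qed

lemma S_lm_midpoint_le: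
  "S_lm F1 F2 lam mu y \<le> (S_lm F1 F2 lam mu (y + h) + S_lm F1 F2 lam mu (y - h)) / 2"
proof -
  define v1 w1 v2 w2 where "v1 = v_opt (y + h)" and "w1 = w_opt (y + h)"
    and "v2 = v_opt (y - h)" and "w2 = w_opt (y - h)"
  have "(1/2) *\<^sub>R w1 + (1/2) *\<^sub>R w2 \<in> dual_ball F2"
    unfolding w1_def w2_def
    using convexD[OF convex_dual_ball[OF norm2] w_opt_in_dual_ball w_opt_in_dual_ball, of "1/2" "1/2"]
    by simp
  then have "S_lm F1 F2 lam mu y \<le> P_val F1 lam mu y ((1/2) *\<^sub>R (v1 + v2)) ((1/2) *\<^sub>R (w1 + w2))"
    unfolding S_lm_eq by (intro P_val_opt_le) (simp add: scaleR_add_right)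
  also have "\<dots> \<le> (P_val F1 lam mu (y + h) v1 w1 + P_val F1 lam mu (y - h) v2 w2) / 2"
  proof -
    have "(1/2) *\<^sub>R ((y + h) + (y - h)) = y"
      by (simp add: scaleR_add_right[symmetric])
    moreover have "0 \<le> lam / 2 * ((norm (v1 - v2))\<^sup>2 / 4)"
      and "0 \<le> 1 / (2 * mu) * ((norm ((y + h - v1 - w1) - (y - h - v2 - w2)))\<^sup>2 / 4)"
      using lam_pos mu_pos by simp_all
    ultimately show ?thesis
      using P_val_midpoint[OF norm1, of lam mu "y + h" "y - h" v1 v2 w1 w2] by simp
  qed
  also have "\<dots> = (S_lm F1 F2 lam mu (y + h) + S_lm F1 F2 lam mu (y - h)) / 2"
    unfolding S_lm_eq v1_def w1_def v2_def w2_def ..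
  finally show ?thesis .
qed

lemma gradient_S_lm: "gradient (S_lm F1 F2 lam mu) y = p_opt y"
proof (intro gradient_eq_if_has_derivative has_derivative_if_quadratic_remainder)
  fix h
  show "\<bar>S_lm F1 F2 lam mu (y + h) - S_lm F1 F2 lam mu y - p_opt y \<bullet> h\<bar> \<le> 1 / (2 * mu) * (norm h)\<^sup>2"
    using S_lm_le_quadratic[of y h] S_lm_le_quadratic[of y "- h"] S_lm_midpoint_le[of y h]
    by (simp add: abs_le_iff)
qed

lemma optimality_gap:
  assumes u: "u \<in> U_set F1 F2 y" and q: "q \<in> subdiff (S_fun F1 F2) y"
  shows "lam / mu * (v_opt y \<bullet> (v_opt y - u)) + p_opt y \<bullet> (p_opt y - q) \<le> 0"
proof -
  define v w p where "v = v_opt y" and "w = w_opt y" and "p = p_opt y"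
  have "y - u \<in> dual_ball F2"
    using u by (simp add: mem_U_set_iff)
  have subgradients: "lam * (v \<bullet> (v - u)) \<le> (p - q) \<bullet> (v - u)"
    using subgradient_v_opt[of y "u - v"] optimality_if_mem_U_set_subdiff(1)[OF u q, of "v - u"]
    unfolding v_def p_def by (simp add: algebra_simps)
  have normals: "(p - q) \<bullet> ((y - u) - w) \<le> 0"
    using normal_p_opt[OF \<open>y - u \<in> dual_ball F2\<close>, of y]
      optimality_if_mem_U_set_subdiff(2)[OF u q w_opt_in_dual_ball[of y]]
    unfolding w_def p_def by (simp add: algebra_simps)
  have "(y - u) - w = (v - u) + mu *\<^sub>R p"
    using mu_pos unfolding v_def w_def p_def p_opt_def by (simp add: algebra_simps)
  then have "lam * (v \<bullet> (v - u)) + mu * (p \<bullet> (p - q)) \<le> 0"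
    using subgradients normals by (simp add: inner_commute algebra_simps)
  then show ?thesis
    using mu_pos unfolding v_def p_def by (simp add: field_simps)
qed

end

locale vanishing_smoothing = norm_pair F1 F2 for F1 F2 :: "'a::euclidean_space \<Rightarrow> real" +
  fixes lam mu :: "nat \<Rightarrow> real" and x :: 'a
  assumes lam_pos: "\<And>k. lam k > 0" and mu_pos: "\<And>k. mu k > 0"
    and lam_lim: "lam \<longlonglongrightarrow> 0" and mu_lim: "mu \<longlonglongrightarrow> 0"
begin

lemma smoothing_instance: "smoothing F1 F2 (lam k) (mu k)"
  using lam_pos mu_pos by unfold_locales

abbreviation v_seq :: "nat \<Rightarrow> 'a" where "v_seq k \<equiv> smoothing.v_opt F1 F2 (lam k) (mu k) x"
abbreviation w_seq :: "nat \<Rightarrow> 'a" where "w_seq k \<equiv> smoothing.w_opt F1 F2 (lam k) (mu k) x"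
abbreviation p_seq :: "nat \<Rightarrow> 'a" where "p_seq k \<equiv> smoothing.p_opt F1 F2 (lam k) (mu k) x"

lemma vanishing_smoothing_subseq:
  "strict_mono r \<Longrightarrow> vanishing_smoothing F1 F2 (lam \<circ> r) (mu \<circ> r)"
  using lam_pos mu_pos LIMSEQ_subseq_LIMSEQ[OF lam_lim] LIMSEQ_subseq_LIMSEQ[OF mu_lim]
  by unfold_locales auto

lemma bounded_v_p_seq: "bounded (range (\<lambda>k. (v_seq k, p_seq k)))"
proof -
  obtain m where m: "m > 0" "\<And>y. m * norm y \<le> F1 y"
    using is_norm_ge_norm[OF norm1] by blast
  obtain L where L: "\<And>k. lam k \<le> L"
    using convergent_imp_bounded[OF lam_lim] unfolding bounded_iff by (metis abs_le_D1 rangeI real_norm_def)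
  obtain B where B: "\<And>g. g \<in> dual_ball F1 \<Longrightarrow> norm g \<le> B"
    using bounded_dual_ball[OF norm1] unfolding bounded_iff by blast
  define V where "V = (F1 x + L / 2 * (norm x)\<^sup>2) / m"
  have v: "norm (v_seq k) \<le> V" for k
  proof -
    have "m * norm (v_seq k) \<le> F1 x + lam k / 2 * (norm x)\<^sup>2"
      using m(2) smoothing.F1_v_opt_le[OF smoothing_instance] order_trans by blast
    also have "\<dots> \<le> F1 x + L / 2 * (norm x)\<^sup>2"
      using L[of k] by (simp add: mult_right_mono)
    finally show ?thesis
      unfolding V_def using m(1) by (simp add: field_simps)
  qed
  have "norm (p_seq k) \<le> B + L * V" for k
  proof -
    have "p_seq k - lam k *\<^sub>R v_seq k \<in> dual_ball F1"
      using subgradient_in_dual_ball[OF norm1 smoothing.subgradient_v_opt[OF smoothing_instance]] .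
    then have "norm (p_seq k - lam k *\<^sub>R v_seq k) \<le> B"
      by (rule B)
    moreover have "norm (lam k *\<^sub>R v_seq k) \<le> L * V"
      using L[of k] v[of k] lam_pos[of k] by (simp add: mult_mono')
    ultimately show ?thesis
      using norm_triangle_ineq[of "p_seq k - lam k *\<^sub>R v_seq k" "lam k *\<^sub>R v_seq k"] by simp
  qed
  then have "range (\<lambda>k. (v_seq k, p_seq k)) \<subseteq> cball 0 V \<times> cball 0 (B + L * V)"
    using v by auto
  then show ?thesis
    by (rule bounded_subset[rotated]) (intro bounded_Times bounded_cball)
qed

lemma limit_optimality:
  assumes v: "v_seq \<longlonglongrightarrow> a" and p: "p_seq \<longlonglongrightarrow> b"
  shows "a \<in> U_set F1 F2 x" and "b \<in> subdiff (S_fun F1 F2) x"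
proof -
  have F1_lim: "(\<lambda>k. F1 (X k)) \<longlonglongrightarrow> F1 l" if "X \<longlonglongrightarrow> l" for X l
    using continuous_on_tendsto_compose[OF is_norm_continuous_on[OF norm1, of UNIV] that] by simp
  have w_eq: "w_seq k = x - v_seq k - mu k *\<^sub>R p_seq k" for k
    using smoothing.u_lm_eq[OF smoothing_instance, of k x]
    by (simp add: u_lm_def smoothing.w_opt_def[OF smoothing_instance] algebra_simps)
  have w: "w_seq \<longlonglongrightarrow> x - a - 0 *\<^sub>R b"
    unfolding w_eq by (intro tendsto_intros v p mu_lim)
  have "F1 a + (b - 0 *\<^sub>R a) \<bullet> h \<le> F1 (a + h)" for h
  proof (rule LIMSEQ_le)
    show "(\<lambda>k. F1 (v_seq k) + (p_seq k - lam k *\<^sub>R v_seq k) \<bullet> h) \<longlonglongrightarrow> F1 a + (b - 0 *\<^sub>R a) \<bullet> h"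
      by (intro tendsto_intros F1_lim v p lam_lim)
    show "(\<lambda>k. F1 (v_seq k + h)) \<longlonglongrightarrow> F1 (a + h)"
      by (intro F1_lim tendsto_intros v)
  qed (use smoothing.subgradient_v_opt[OF smoothing_instance] in auto)
  moreover have "x - a \<in> dual_ball F2"
    using Lim_in_closed_set[OF closed_dual_ball[OF norm2] _ _ w]
      smoothing.w_opt_in_dual_ball[OF smoothing_instance] by simp
  moreover have "b \<bullet> (w - (x - a)) \<le> 0" if "w \<in> dual_ball F2" for w
  proof -
    have "(\<lambda>k. p_seq k \<bullet> (w - w_seq k)) \<longlonglongrightarrow> b \<bullet> (w - (x - a - 0 *\<^sub>R b))"
      by (intro tendsto_intros p w)
    then have "b \<bullet> (w - (x - a - 0 *\<^sub>R b)) \<le> 0"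
      by (rule LIMSEQ_le_const2) (use smoothing.normal_p_opt[OF smoothing_instance that] in auto)
    then show ?thesis
      by simp
  qed
  ultimately show "a \<in> U_set F1 F2 x" and "b \<in> subdiff (S_fun F1 F2) x"
    using mem_U_set_subdiff_if_optimality[of a b x] by auto
qed

lemma limit_eq_closest_point:
  assumes ratio: "(\<lambda>k. lam k / mu k) \<longlonglongrightarrow> c" and "c > 0"
    and v: "v_seq \<longlonglongrightarrow> a" and p: "p_seq \<longlonglongrightarrow> b"
  shows "a = closest_point (U_set F1 F2 x) 0" and "b = closest_point (subdiff (S_fun F1 F2) x) 0"
proof -
  have aU: "a \<in> U_set F1 F2 x" and bS: "b \<in> subdiff (S_fun F1 F2) x"
    using limit_optimality[OF v p] by auto
  have gap: "c * (a \<bullet> (a - u)) + b \<bullet> (b - q) \<le> 0"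
    if "u \<in> U_set F1 F2 x" and "q \<in> subdiff (S_fun F1 F2) x" for u q
  proof (rule LIMSEQ_le_const2)
    show "(\<lambda>k. lam k / mu k * (v_seq k \<bullet> (v_seq k - u)) + p_seq k \<bullet> (p_seq k - q))
        \<longlonglongrightarrow> c * (a \<bullet> (a - u)) + b \<bullet> (b - q)"
      by (intro tendsto_intros ratio v p)
  qed (use smoothing.optimality_gap[OF smoothing_instance that] in auto)
  have "a \<bullet> (a - u) \<le> 0" if "u \<in> U_set F1 F2 x" for u
    using gap[OF that bS] \<open>c > 0\<close> by (simp add: mult_le_0_iff)
  then show "a = closest_point (U_set F1 F2 x) 0"
    using closest_point_0_eq[OF aU] by simp
  have "b \<bullet> (b - q) \<le> 0" if "q \<in> subdiff (S_fun F1 F2) x" for q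
    using gap[OF aU that] by simp
  then show "b = closest_point (subdiff (S_fun F1 F2) x) 0"
    using closest_point_0_eq[OF bS] by simp
qed

lemma tendsto_closest_points:
  assumes ratio: "(\<lambda>k. lam k / mu k) \<longlonglongrightarrow> c" and "c > 0"
  shows "(\<lambda>k. (v_seq k, p_seq k)) \<longlonglongrightarrow>
    (closest_point (U_set F1 F2 x) 0, closest_point (subdiff (S_fun F1 F2) x) 0)"
proof (rule LIMSEQ_if_subseq_limits_eq[OF bounded_v_p_seq])
  fix r l
  assume r: "strict_mono r" and lim: "((\<lambda>k. (v_seq k, p_seq k)) \<circ> r) \<longlonglongrightarrow> l"
  interpret sub: vanishing_smoothing F1 F2 "lam \<circ> r" "mu \<circ> r" x
    using vanishing_smoothing_subseq[OF r] .
  have "sub.v_seq \<longlonglongrightarrow> fst l" and "sub.p_seq \<longlonglongrightarrow> snd l"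
    using tendsto_fst[OF lim] tendsto_snd[OF lim] by (simp_all add: o_def)
  moreover have "(\<lambda>k. (lam \<circ> r) k / (mu \<circ> r) k) \<longlonglongrightarrow> c"
    using LIMSEQ_subseq_LIMSEQ[OF ratio r] by (simp add: o_def)
  ultimately show "l = (closest_point (U_set F1 F2 x) 0, closest_point (subdiff (S_fun F1 F2) x) 0)"
    using sub.limit_eq_closest_point[OF _ \<open>c > 0\<close>] by (simp add: prod_eq_iff)
qed

end

theorem proposition5p4:
  fixes F1 F2 :: "'a::euclidean_space \<Rightarrow> real" and x :: 'a
    and lam mu :: "nat \<Rightarrow> real" and c :: real
  assumes "is_norm F1" and "is_norm F2"
    and "\<And>k. lam k > 0" and "\<And>k. mu k > 0"
    and "lam \<longlonglongrightarrow> 0" and "mu \<longlonglongrightarrow> 0"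
    and "c > 0" and "(\<lambda>k. lam k / mu k) \<longlonglongrightarrow> c"
  shows "(\<lambda>k. u_lm F1 F2 (lam k) (mu k) x) \<longlonglongrightarrow> closest_point (U_set F1 F2 x) 0
       \<and> (\<lambda>k. gradient (S_lm F1 F2 (lam k) (mu k)) x) \<longlonglongrightarrow> closest_point (subdiff (S_fun F1 F2) x) 0"
proof -
  interpret vanishing_smoothing F1 F2 lam mu x
    using assms(1-6) by unfold_locales
  have v: "v_seq \<longlonglongrightarrow> closest_point (U_set F1 F2 x) 0"
    and p: "p_seq \<longlonglongrightarrow> closest_point (subdiff (S_fun F1 F2) x) 0"
    using tendsto_fst[OF tendsto_closest_points] tendsto_snd[OF tendsto_closest_points] assms(7,8)
    by auto
  have "(\<lambda>k. v_seq k + mu k *\<^sub>R p_seq k) \<longlonglongrightarrow> closest_point (U_set F1 F2 x) 0 + 0 *\<^sub>R closest_point (subdiff (S_fun F1 F2) x) 0"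
    by (intro tendsto_intros v p mu_lim)
  then show ?thesis
    using p by (simp add: smoothing.u_lm_eq[OF smoothing_instance] smoothing.gradient_S_lm[OF smoothing_instance])
qed

end
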